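(* Any finite group that has a nontrivial quotient of odd order is not mixable.
   Context: For a finite group $G$, a random subproduct is a random element $g_1^{\epsilon_1}\cdots g_k^{\epsilon_k}$ where $g_1,\dots,g_k\in G$ are fixed and $\epsilon_1,\dots,\epsilon_k$ are independent Bernoulli random variables with $\epsilon_i\sim\mathrm{Ber}(p_i)$, $p_i\in[0,1]$. $G$ is called mixable if some random subproduct is distributed exactly uniformly on $G$. *)

theory Defs
  imports "HOL-Algebra.Algebra"
begin

text \<open>The subproduct g_1^e_1 ... g_k^e_k for a list of group elements gs and a
  list of bits es (True = exponent 1, False = exponent 0), multiplied left to right.\<close>
definition subprod :: "('a, 'b) monoid_scheme \<Rightarrow> 'a list \<Rightarrow> bool list \<Rightarrow> 'a" where
  "subprod G gs es =
     foldr (\<lambda>(g, e) acc. (if e then g else \<one>\<^bsub>G\<^esub>) \<otimes>\<^bsub>G\<^esub> acc) (zip gs es) \<one>\<^bsub>G\<^esub>"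

text \<open>Probability of the bit pattern es when the bits are independent with e_i ~ Ber(p_i).\<close>
definition bern_weight :: "real list \<Rightarrow> bool list \<Rightarrow> real" where
  "bern_weight ps es = prod_list (map (\<lambda>(p, e). if e then p else 1 - p) (zip ps es))"

definition subprod_prob :: "('a, 'b) monoid_scheme \<Rightarrow> 'a list \<Rightarrow> real list \<Rightarrow> 'a \<Rightarrow> real" where
  "subprod_prob G gs ps x =
     (\<Sum>es\<in>{es. length es = length gs}. if subprod G gs es = x then bern_weight ps es else 0)"

definition mixable :: "('a, 'b) monoid_scheme \<Rightarrow> bool" where
  "mixable G \<longleftrightarrow>
     (\<exists>gs ps. set gs \<subseteq> carrier G \<and> length ps = length gs \<and>
        (\<forall>p\<in>set ps. 0 \<le> p \<and> p \<le> 1) \<and>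
        (\<forall>x\<in>carrier G. subprod_prob G gs ps x = 1 / real (card (carrier G))))"

end

theory Submission
  imports Defs
begin

(* If N is a proper normal subgroup of odd index, a uniform random subproduct in G projects to a
   uniform one in Q = G/N, so it suffices to show that a nontrivial group Q of odd order is not
   mixable. For the random subproduct S = g_1^e_1 ... g_k^e_k, the averaging operator
   T f (x) = E f(x S) on real functions on Q is the composite of the operators
   f |-> (1 - p_i) f + p_i f(_ g_i). Each of these is injective: from (1 - p) f(x) + p f(x g) = 0
   we get f(x g^n) = (-c)^n f(x) with c = (1 - p)/p >= 0, and g^m = 1 for the odd m = |Q| gives
   f(x) = -c^m f(x). But if S is uniform, T f is the constant mean of f, so T kills the nonzero
   function delta_1 - delta_a for any a <> 1. *)

lemma finite_bool_lists_length: "finite {es::bool list. length es = n}"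
  using finite_lists_length_eq[of "UNIV::bool set" n] by simp

lemma sum_bool_lists_length_Suc:
  "(\<Sum>es\<in>{es::bool list. length es = Suc n}. F es) =
   (\<Sum>es\<in>{es. length es = n}. F (True # es)) + (\<Sum>es\<in>{es. length es = n}. F (False # es))"
proof -
  let ?L = "{es::bool list. length es = n}"
  have "{es::bool list. length es = Suc n} = Cons True ` ?L \<union> Cons False ` ?L"
    by (auto simp: length_Suc_conv)
  moreover have "(\<Sum>es\<in>Cons True ` ?L \<union> Cons False ` ?L. F es) =
      (\<Sum>es\<in>Cons True ` ?L. F es) + (\<Sum>es\<in>Cons False ` ?L. F es)"
    by (rule sum.union_disjoint) (auto simp: finite_bool_lists_length)
  ultimately show ?thesis
    by (simp add: sum.reindex)
qed

lemma subprod_Nil1 [simp]: "subprod G [] es = \<one>\<^bsub>G\<^esub>"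
  by (simp add: subprod_def)

lemma subprod_Nil2 [simp]: "subprod G gs [] = \<one>\<^bsub>G\<^esub>"
  by (simp add: subprod_def)

lemma subprod_Cons [simp]:
  "subprod G (g # gs) (e # es) = (if e then g else \<one>\<^bsub>G\<^esub>) \<otimes>\<^bsub>G\<^esub> subprod G gs es"
  by (simp add: subprod_def)

lemma bern_weight_Nil [simp]: "bern_weight ps [] = 1"
  by (simp add: bern_weight_def)

lemma bern_weight_Cons [simp]:
  "bern_weight (p # ps) (e # es) = (if e then p else 1 - p) * bern_weight ps es"
  by (simp add: bern_weight_def)

lemma (in monoid) subprod_closed:
  "set gs \<subseteq> carrier G \<Longrightarrow> subprod G gs es \<in> carrier G"
proof (induction gs arbitrary: es)
  case (Cons g gs)
  then show ?case
    by (cases es) auto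
qed simp

lemma (in group_hom) subprod_hom:
  "set gs \<subseteq> carrier G \<Longrightarrow> subprod H (map h gs) es = h (subprod G gs es)"
proof (induction gs arbitrary: es)
  case (Cons g gs)
  then show ?case
    by (cases es) (auto simp: G.subprod_closed)
qed simp

lemma (in monoid) sum_bern_weight_subprod:
  assumes "finite (carrier G)" "set gs \<subseteq> carrier G"
  shows "(\<Sum>es\<in>{es. length es = length gs}. bern_weight ps es * F (subprod G gs es)) =
         (\<Sum>y\<in>carrier G. subprod_prob G gs ps y * F y)"
proof -
  let ?L = "{es::bool list. length es = length gs}"
  have "(\<Sum>es\<in>?L. bern_weight ps es * F (subprod G gs es)) =
        (\<Sum>es\<in>?L. \<Sum>y\<in>carrier G. if subprod G gs es = y then bern_weight ps es * F y else 0)"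
    using assms by (intro sum.cong refl) (simp add: subprod_closed)
  also have "\<dots> = (\<Sum>y\<in>carrier G. \<Sum>es\<in>?L. if subprod G gs es = y then bern_weight ps es * F y else 0)"
    by (rule sum.swap)
  also have "\<dots> = (\<Sum>y\<in>carrier G. subprod_prob G gs ps y * F y)"
    by (auto simp: subprod_prob_def sum_distrib_right intro!: sum.cong)
  finally show ?thesis .
qed

lemma (in group_hom) subprod_prob_hom:
  assumes "finite (carrier G)" "set gs \<subseteq> carrier G"
  shows "subprod_prob H (map h gs) ps y = (\<Sum>x\<in>{x\<in>carrier G. h x = y}. subprod_prob G gs ps x)"
proof -
  have "subprod_prob H (map h gs) ps y =
      (\<Sum>es\<in>{es. length es = length gs}. bern_weight ps es * (if h (subprod G gs es) = y then 1 else 0))"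
    using assms(2) by (auto simp: subprod_prob_def subprod_hom intro: sum.cong)
  also have "\<dots> = (\<Sum>x\<in>carrier G. subprod_prob G gs ps x * (if h x = y then 1 else 0))"
    using assms by (rule G.sum_bern_weight_subprod)
  also have "\<dots> = (\<Sum>x\<in>{x\<in>carrier G. h x = y}. subprod_prob G gs ps x)"
    using assms(1) by (auto simp: sum.inter_filter intro!: sum.cong)
  finally show ?thesis .
qed

lemma (in normal) mixable_FactGroup:
  assumes fin: "finite (carrier G)" and "mixable G"
  shows "mixable (G Mod H)"
proof -
  obtain gs ps where gs: "set gs \<subseteq> carrier G" and len: "length ps = length gs"
    and ps: "\<forall>p\<in>set ps. 0 \<le> p \<and> p \<le> 1"
    and uniform: "\<forall>x\<in>carrier G. subprod_prob G gs ps x = 1 / real (card (carrier G))"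
    using assms(2) unfolding mixable_def by blast
  interpret quotient: group_hom G "G Mod H" "\<lambda>a. H #> a"
    by (simp add: group_hom_def group_hom_axioms_def factorgroup_is_group r_coset_hom_Mod is_group)
  have lagrange_real: "real (card (carrier (G Mod H))) * real (card H) = real (card (carrier G))"
    using lagrange[OF is_subgroup] unfolding FactGroup_def order_def by (simp flip: of_nat_mult)
  have card_H_pos: "card H > 0"
    using fin finite_subset[OF subset] subgroup.one_closed[OF is_subgroup] card_gt_0_iff by blast
  have "subprod_prob (G Mod H) (map (\<lambda>a. H #> a) gs) ps C = 1 / real (card (carrier (G Mod H)))"
    if C: "C \<in> carrier (G Mod H)" for C
  proof -
    obtain a where a: "a \<in> carrier G" and C_eq: "C = H #> a"
      using C unfolding carrier_FactGroup by blast
    have C_sub: "C \<subseteq> carrier G"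
      using C_eq a subgroup.elemrcos_carrier[OF is_subgroup] by blast
    have fibre: "{x\<in>carrier G. H #> x = C} = C"
      using C_eq a C_sub repr_independence[OF _ a is_subgroup] repr_independenceD[OF is_subgroup]
      by blast
    have "subprod_prob (G Mod H) (map (\<lambda>a. H #> a) gs) ps C = (\<Sum>x\<in>C. subprod_prob G gs ps x)"
      using quotient.subprod_prob_hom[OF fin gs] fibre by simp
    also have "\<dots> = real (card C) / real (card (carrier G))"
      using uniform C_sub by (simp add: subset_iff)
    also have "card C = card H"
      using card_rcosets_equal[OF rcosetsI[OF subset a] subset] C_eq by simp
    finally show ?thesis
      using card_H_pos by (simp flip: lagrange_real)
  qed
  moreover have "set (map (\<lambda>a. H #> a) gs) \<subseteq> carrier (G Mod H)"
    using gs by auto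
  ultimately show ?thesis
    unfolding mixable_def using len ps by (metis length_map)
qed

definition subprod_expect :: "('a, 'b) monoid_scheme \<Rightarrow> 'a list \<Rightarrow> real list \<Rightarrow> ('a \<Rightarrow> real) \<Rightarrow> 'a \<Rightarrow> real" where
  "subprod_expect G gs ps f x =
     (\<Sum>es\<in>{es. length es = length gs}. bern_weight ps es * f (x \<otimes>\<^bsub>G\<^esub> subprod G gs es))"

lemma (in monoid) subprod_expect_Nil:
  "x \<in> carrier G \<Longrightarrow> subprod_expect G [] ps f x = f x"
  by (simp add: subprod_expect_def)

lemma (in monoid) subprod_expect_Cons:
  assumes "g \<in> carrier G" "set gs \<subseteq> carrier G" "x \<in> carrier G"
  shows "subprod_expect G (g # gs) (p # ps) f x =
         (1 - p) * subprod_expect G gs ps f x + p * subprod_expect G gs ps f (x \<otimes> g)"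
  using assms subprod_closed[OF assms(2)]
  by (simp add: subprod_expect_def sum_bool_lists_length_Suc sum_distrib_left m_assoc mult.assoc)

lemma (in group) subprod_expect_uniform:
  assumes "finite (carrier G)" "set gs \<subseteq> carrier G" "x \<in> carrier G"
    and "\<forall>y\<in>carrier G. subprod_prob G gs ps y = 1 / real (card (carrier G))"
  shows "subprod_expect G gs ps f x = (\<Sum>y\<in>carrier G. f y) / real (card (carrier G))"
proof -
  have "subprod_expect G gs ps f x = (\<Sum>y\<in>carrier G. f (x \<otimes> y)) / real (card (carrier G))"
    using assms sum_bern_weight_subprod[OF assms(1,2), of ps "\<lambda>y. f (x \<otimes> y)"]
    by (simp add: subprod_expect_def sum_divide_distrib)
  also have "(\<Sum>y\<in>carrier G. f (x \<otimes> y)) = (\<Sum>y\<in>carrier G. f y)"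
    using sum.reindex[OF inj_on_cmult[OF assms(3)], of f] surj_const_mult[OF assms(3)]
    by (simp add: comp_def)
  finally show ?thesis .
qed

lemma (in group) lazy_translation_eq_0_imp_eq_0:
  fixes f :: "'a \<Rightarrow> real" and m :: nat
  assumes g: "g \<in> carrier G" and "g [^] m = \<one>" "odd m" and p: "0 \<le> p" "p \<le> 1"
    and f: "\<forall>x\<in>carrier G. (1 - p) * f x + p * f (x \<otimes> g) = 0"
    and x: "x \<in> carrier G"
  shows "f x = 0"
proof (cases "p = 0")
  case True
  then show ?thesis
    using f x by simp
next
  case False
  define c where "c = (1 - p) / p"
  have step: "f (y \<otimes> g) = - c * f y" if "y \<in> carrier G" for y
    using f that False by (auto simp: c_def field_simps add_eq_0_iff)
  have iterate: "f (x \<otimes> g [^] k) = (- c) ^ k * f x" for k :: nat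
  proof (induction k)
    case (Suc k)
    have "x \<otimes> g [^] Suc k = (x \<otimes> g [^] k) \<otimes> g"
      using x g by (simp add: m_assoc)
    then show ?case
      using step[of "x \<otimes> g [^] k"] Suc x g by simp
  qed (use x in simp)
  have "f x = - (c ^ m) * f x"
    using iterate[of m] assms(2,3) x by (simp add: power_minus_odd)
  then have "(1 + c ^ m) * f x = 0"
    by (simp add: algebra_simps)
  moreover have "1 + c ^ m > 0"
    using p by (simp add: c_def add_pos_nonneg)
  ultimately show ?thesis by simp
qed

lemma (in group) subprod_expect_eq_0_imp_eq_0:
  assumes odd_exponent: "\<forall>g\<in>carrier G. \<exists>m. odd m \<and> g [^] (m::nat) = \<one>"
    and "set gs \<subseteq> carrier G" "length ps = length gs" "\<forall>p\<in>set ps. 0 \<le> p \<and> p \<le> 1"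
    and "\<forall>x\<in>carrier G. subprod_expect G gs ps f x = 0"
  shows "\<forall>x\<in>carrier G. f x = 0"
  using assms(2-)
proof (induction gs arbitrary: ps)
  case Nil
  then show ?case by (simp add: subprod_expect_Nil)
next
  case (Cons g gs)
  then obtain p ps' where ps: "ps = p # ps'"
    by (cases ps) auto
  have g: "g \<in> carrier G" and gs: "set gs \<subseteq> carrier G"
    using Cons.prems by auto
  obtain m :: nat where m: "odd m" "g [^] m = \<one>"
    using odd_exponent g by blast
  have p: "0 \<le> p" "p \<le> 1"
    using Cons.prems(3) ps by auto
  have "\<forall>x\<in>carrier G. (1 - p) * subprod_expect G gs ps' f x + p * subprod_expect G gs ps' f (x \<otimes> g) = 0"
    using Cons.prems(4) subprod_expect_Cons[OF g gs] ps by simp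
  then have "\<forall>x\<in>carrier G. subprod_expect G gs ps' f x = 0"
    using lazy_translation_eq_0_imp_eq_0[OF g m(2,1) p] by blast
  then show ?case
    using Cons.IH[of ps'] Cons.prems gs ps by simp
qed

lemma (in group) odd_order_not_mixable:
  assumes fin: "finite (carrier G)" and "odd (order G)" and nontrivial: "carrier G \<noteq> {\<one>}"
  shows "\<not> mixable G"
proof
  assume "mixable G"
  then obtain gs ps where gs: "set gs \<subseteq> carrier G" and len: "length ps = length gs"
    and ps: "\<forall>p\<in>set ps. 0 \<le> p \<and> p \<le> 1"
    and uniform: "\<forall>x\<in>carrier G. subprod_prob G gs ps x = 1 / real (card (carrier G))"
    unfolding mixable_def by blast
  obtain a where a: "a \<in> carrier G" "a \<noteq> \<one>"
    using nontrivial one_closed by blast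
  define f :: "'a \<Rightarrow> real" where "f z = (if z = \<one> then 1 else 0) - (if z = a then 1 else 0)" for z
  have "(\<Sum>y\<in>carrier G. f y) = 0"
    using fin a by (simp add: f_def sum_subtractf)
  then have "\<forall>x\<in>carrier G. subprod_expect G gs ps f x = 0"
    using subprod_expect_uniform[OF fin gs _ uniform] by simp
  moreover have "\<forall>g\<in>carrier G. \<exists>m. odd m \<and> g [^] (m::nat) = \<one>"
    using pow_order_eq_1 assms(2) by blast
  ultimately have "f \<one> = 0"
    using subprod_expect_eq_0_imp_eq_0[OF _ gs len ps, of f] by blast
  then show False
    using a by (simp add: f_def)
qed

theorem mainTheorem2:
  fixes G :: "('a, 'b) monoid_scheme"
  assumes "group G" and "finite (carrier G)"
    and "\<exists>N. N \<lhd> G \<and> N \<noteq> carrier G \<and> odd (card (carrier (G Mod N)))"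
  shows "\<not> mixable G"
proof -
  obtain N where N: "N \<lhd> G" and proper: "N \<noteq> carrier G" and odd: "odd (card (carrier (G Mod N)))"
    using assms(3) by blast
  interpret normal N G
    by (fact N)
  have "group (G Mod N)"
    by (rule factorgroup_is_group)
  moreover have "finite (carrier (G Mod N))"
    using assms(2) by (simp add: carrier_FactGroup)
  moreover have "carrier (G Mod N) \<noteq> {\<one>\<^bsub>G Mod N\<^esub>}"
    using fact_group_trivial_iff[OF assms(2)] proper by blast
  ultimately have "\<not> mixable (G Mod N)"
    using odd group.odd_order_not_mixable by (metis order_def)
  then show ?thesis
    using mixable_FactGroup[OF assms(2)] by blast
qed

end
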